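(* Let $\mathbf{k}$ be a field, $p\ge3$ an integer, $S=\mathbf{k}[e_1,\dots,e_{2p}]$, $f_0=t^2+e_pt+e_{2p}$ and $f_i=e_it+e_{p+i}$ for $1\le i\le p-1$ in $S[t]$, and $I=\langle f_0,\dots,f_{p-1}\rangle\cap S$. Let $\varphi:S\to\mathbf{k}[u_1,\dots,u_p,\alpha]$ be the $\mathbf{k}$-algebra homomorphism with $\varphi(e_i)=u_i$ for $1\le i\le p-1$, $\varphi(e_p)=u_p+\alpha$, and $\varphi(e_i)=u_{i-p}\alpha$ for $p+1\le i\le 2p$. Then $I=\ker(\varphi)$. *)

theory Defs
  imports "HOL-Library.Poly_Mapping" "HOL-Computational_Algebra.Polynomial"
begin

text \<open>Multivariate polynomials over a coefficient ring 'a in the variables indexed by nat: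
  a polynomial is a finitely supported map from monomials (finitely supported exponent
  vectors nat \<Rightarrow>0 nat) to coefficients; the ring structure is the convolution product
  from HOL-Library.Poly_Mapping.\<close>

type_synonym 'a mpoly = "(nat \<Rightarrow>\<^sub>0 nat) \<Rightarrow>\<^sub>0 'a"

definition mvar :: "nat \<Rightarrow> 'a::comm_ring_1 mpoly" where
  "mvar v = Poly_Mapping.single (Poly_Mapping.single v 1) 1"

definition mconst :: "'a::comm_ring_1 \<Rightarrow> 'a mpoly" where
  "mconst c = Poly_Mapping.single 0 c"

definition mvars :: "'a::zero mpoly \<Rightarrow> nat set" where
  "mvars P = \<Union> (Poly_Mapping.keys ` Poly_Mapping.keys P)"

definition msubst :: "(nat \<Rightarrow> 'a::comm_ring_1 mpoly) \<Rightarrow> 'a mpoly \<Rightarrow> 'a mpoly" where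
  "msubst \<sigma> P = (\<Sum>m\<in>Poly_Mapping.keys P.
      mconst (Poly_Mapping.lookup P m) * (\<Prod>v\<in>Poly_Mapping.keys m. \<sigma> v ^ Poly_Mapping.lookup m v))"

text \<open>S = k[e_1,...,e_{2p}], with e_i the variable number i.\<close>
definition S_ring :: "nat \<Rightarrow> 'a::comm_ring_1 mpoly set" where
  "S_ring p = {g. mvars g \<subseteq> {1..2*p}}"

definition fgen :: "nat \<Rightarrow> nat \<Rightarrow> 'a::comm_ring_1 mpoly poly" where
  "fgen p i = (if i = 0 then [:mvar (2*p), mvar p, 1:] else [:mvar (p+i), mvar i:])"

text \<open>I = <f_0,...,f_{p-1}> \<inter> S, where the ideal is taken in S[t]
  (elements of S are identified with constant polynomials in t).\<close>
definition I_ideal :: "nat \<Rightarrow> 'a::comm_ring_1 mpoly set" where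
  "I_ideal p = {g \<in> S_ring p. \<exists>c :: nat \<Rightarrow> 'a mpoly poly.
      (\<forall>i<p. \<forall>j. coeff (c i) j \<in> S_ring p) \<and> [:g:] = (\<Sum>i<p. c i * fgen p i)}"

text \<open>phi : S \<rightarrow> k[u_1,...,u_p,alpha], with u_i the variable i (1 \<le> i \<le> p) and alpha the
  variable 0: e_i \<mapsto> u_i (i<p), e_p \<mapsto> u_p + alpha, e_i \<mapsto> u_{i-p} alpha (p<i\<le>2p).\<close>
definition phi_img :: "nat \<Rightarrow> nat \<Rightarrow> 'a::comm_ring_1 mpoly" where
  "phi_img p i = (if i < p then mvar i else if i = p then mvar p + mvar 0
                  else mvar (i - p) * mvar 0)"

definition phi :: "nat \<Rightarrow> 'a::comm_ring_1 mpoly \<Rightarrow> 'a mpoly" where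
  "phi p = msubst (phi_img p)"

definition ker_phi :: "nat \<Rightarrow> 'a::comm_ring_1 mpoly set" where
  "ker_phi p = {g \<in> S_ring p. phi p g = 0}"

end

(*
  Evaluating coefficients with phi and then t at -alpha kills every f_i, hence all of I.
  Conversely, modulo the f_i each e_(p+i) is congruent to -e_i t and e_(2p) to -t^2 - e_p t.
  This reduction of S into S[t] factors as psi o phi, where psi sends alpha to -t, u_p to
  e_p + t and u_i to e_i. So a g in ker phi is congruent to psi (phi g) = 0, and projecting
  the cofactors back onto S shows g \<in> I.
*)
theory Submission
  imports Defs
begin

locale comm_ring_hom =
  fixes hom :: "'a::comm_ring_1 \<Rightarrow> 'b::comm_ring_1"
  assumes hom_add: "hom (x + y) = hom x + hom y"
    and hom_mult: "hom (x * y) = hom x * hom y"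
    and hom_one [simp]: "hom 1 = 1"
begin

lemma hom_zero [simp]: "hom 0 = 0"
  using hom_add[of 0 0] by simp

lemma hom_sum: "hom (sum f A) = (\<Sum>x\<in>A. hom (f x))"
  by (induction A rule: infinite_finite_induct) (simp_all add: hom_add)

lemma hom_prod: "hom (prod f A) = (\<Prod>x\<in>A. hom (f x))"
  by (induction A rule: infinite_finite_induct) (simp_all add: hom_mult)

lemma hom_power: "hom (x ^ n) = hom x ^ n"
  by (induction n) (simp_all add: hom_mult)

lemma map_poly_hom_add: "map_poly hom (p + q) = map_poly hom p + map_poly hom q"
  by (rule poly_eqI) (simp add: coeff_map_poly hom_add)

lemma map_poly_hom_smult: "map_poly hom (smult a q) = smult (hom a) (map_poly hom q)"
  by (rule poly_eqI) (simp add: coeff_map_poly hom_mult)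

lemma map_poly_hom_mult: "map_poly hom (p * q) = map_poly hom p * map_poly hom q"
  by (induction p) (simp_all add: map_poly_hom_add map_poly_hom_smult map_poly_pCons)

lemma comm_ring_hom_map_poly: "comm_ring_hom (map_poly hom)"
  by unfold_locales (simp_all add: map_poly_hom_add map_poly_hom_mult)

end

lemma comm_ring_hom_compose:
  "comm_ring_hom h \<Longrightarrow> comm_ring_hom k \<Longrightarrow> comm_ring_hom (h \<circ> k)"
  by (simp add: comm_ring_hom_def)

lemma comm_ring_hom_const_poly: "comm_ring_hom (\<lambda>x. [:x:])"
  by unfold_locales (simp_all add: pCons_one)

lemma comm_ring_hom_poly_eval: "comm_ring_hom (\<lambda>q. poly q x)"
  by unfold_locales simp_all

lemma comm_ring_hom_mconst: "comm_ring_hom mconst"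
  by unfold_locales (simp_all add: mconst_def single_add mult_single)

definition monom_eval :: "(nat \<Rightarrow> 'b::comm_ring_1) \<Rightarrow> (nat \<Rightarrow>\<^sub>0 nat) \<Rightarrow> 'b" where
  "monom_eval \<sigma> m = (\<Prod>v\<in>Poly_Mapping.keys m. \<sigma> v ^ Poly_Mapping.lookup m v)"

definition meval :: "('a::comm_ring_1 \<Rightarrow> 'b::comm_ring_1) \<Rightarrow> (nat \<Rightarrow> 'b) \<Rightarrow> 'a mpoly \<Rightarrow> 'b" where
  "meval \<kappa> \<sigma> P = (\<Sum>m\<in>Poly_Mapping.keys P. \<kappa> (Poly_Mapping.lookup P m) * monom_eval \<sigma> m)"

lemma msubst_eq_meval: "msubst \<sigma> = meval mconst \<sigma>"
  by (rule ext) (simp add: msubst_def meval_def monom_eval_def)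

lemma monom_eval_superset:
  assumes "finite K" "Poly_Mapping.keys m \<subseteq> K"
  shows "monom_eval \<sigma> m = (\<Prod>v\<in>K. \<sigma> v ^ Poly_Mapping.lookup m v)"
  unfolding monom_eval_def
  by (rule prod.mono_neutral_left[OF assms]) (simp add: in_keys_iff)

lemma monom_eval_zero [simp]: "monom_eval \<sigma> 0 = 1"
  by (simp add: monom_eval_def)

lemma monom_eval_add: "monom_eval \<sigma> (a + b) = monom_eval \<sigma> a * monom_eval \<sigma> b"
proof -
  let ?K = "Poly_Mapping.keys a \<union> Poly_Mapping.keys b"
  have "monom_eval \<sigma> (a + b) = (\<Prod>v\<in>?K. \<sigma> v ^ Poly_Mapping.lookup (a + b) v)"
    by (rule monom_eval_superset) (simp_all add: keys_add)
  also have "\<dots> = (\<Prod>v\<in>?K. \<sigma> v ^ Poly_Mapping.lookup a v) * (\<Prod>v\<in>?K. \<sigma> v ^ Poly_Mapping.lookup b v)"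
    by (simp add: lookup_add power_add prod.distrib)
  also have "\<dots> = monom_eval \<sigma> a * monom_eval \<sigma> b"
    using monom_eval_superset[of ?K a \<sigma>] monom_eval_superset[of ?K b \<sigma>] by simp
  finally show ?thesis .
qed

lemma meval_zero [simp]: "meval \<kappa> \<sigma> 0 = 0"
  by (simp add: meval_def)

lemma sum_single_lookup:
  "(\<Sum>m\<in>Poly_Mapping.keys P. Poly_Mapping.single m (Poly_Mapping.lookup P m)) = P"
  by (rule poly_mapping_eqI) (auto simp: lookup_sum lookup_single when_def in_keys_iff)

context comm_ring_hom
begin

lemma meval_superset:
  assumes "finite K" "Poly_Mapping.keys P \<subseteq> K"
  shows "meval hom \<sigma> P = (\<Sum>m\<in>K. hom (Poly_Mapping.lookup P m) * monom_eval \<sigma> m)"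
  unfolding meval_def
  by (rule sum.mono_neutral_left[OF assms]) (simp add: in_keys_iff)

lemma meval_add: "meval hom \<sigma> (P + Q) = meval hom \<sigma> P + meval hom \<sigma> Q"
proof -
  let ?K = "Poly_Mapping.keys P \<union> Poly_Mapping.keys Q"
  have "finite ?K" "Poly_Mapping.keys (P + Q) \<subseteq> ?K"
    by (simp_all add: keys_add)
  then show ?thesis
    by (simp add: meval_superset[of ?K] lookup_add hom_add distrib_right sum.distrib)
qed

lemma meval_single: "meval hom \<sigma> (Poly_Mapping.single m c) = hom c * monom_eval \<sigma> m"
  by (cases "c = 0") (simp_all add: meval_def)

lemma meval_sum: "meval hom \<sigma> (sum f A) = (\<Sum>x\<in>A. meval hom \<sigma> (f x))"
  by (induction A rule: infinite_finite_induct) (simp_all add: meval_add)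

lemma meval_mult: "meval hom \<sigma> (P * Q) = meval hom \<sigma> P * meval hom \<sigma> Q"
proof -
  let ?P = "Poly_Mapping.lookup P" and ?Q = "Poly_Mapping.lookup Q"
  have "P * Q = (\<Sum>a\<in>Poly_Mapping.keys P. Poly_Mapping.single a (?P a)) *
      (\<Sum>b\<in>Poly_Mapping.keys Q. Poly_Mapping.single b (?Q b))"
    by (simp only: sum_single_lookup)
  also have "\<dots> = (\<Sum>a\<in>Poly_Mapping.keys P. \<Sum>b\<in>Poly_Mapping.keys Q.
      Poly_Mapping.single (a + b) (?P a * ?Q b))"
    by (simp add: sum_distrib_left sum_distrib_right mult_single
        sum.swap[of _ "Poly_Mapping.keys Q"])
  finally have "meval hom \<sigma> (P * Q) = (\<Sum>a\<in>Poly_Mapping.keys P. \<Sum>b\<in>Poly_Mapping.keys Q.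
      (hom (?P a) * monom_eval \<sigma> a) * (hom (?Q b) * monom_eval \<sigma> b))"
    by (simp add: meval_sum meval_single hom_mult monom_eval_add mult_ac)
  also have "\<dots> = meval hom \<sigma> P * meval hom \<sigma> Q"
    by (simp add: meval_def sum_distrib_left sum_distrib_right sum.swap[of _ "Poly_Mapping.keys Q"])
  finally show ?thesis .
qed

lemma comm_ring_hom_meval: "comm_ring_hom (meval hom \<sigma>)"
  by unfold_locales (simp_all add: meval_add meval_mult meval_single flip: single_one)

lemma meval_mvar [simp]: "meval hom \<sigma> (mvar v) = \<sigma> v"
  by (simp add: mvar_def meval_single monom_eval_def)

lemma meval_mconst [simp]: "meval hom \<sigma> (mconst c) = hom c"
  by (simp add: mconst_def meval_single)

lemma hom_meval: "hom (meval \<kappa> \<sigma> P) = meval (hom \<circ> \<kappa>) (hom \<circ> \<sigma>) P"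
  by (simp add: meval_def monom_eval_def hom_sum hom_mult hom_prod hom_power)

end

lemma mvar_power: "mvar v ^ n = Poly_Mapping.single (Poly_Mapping.single v n) 1"
proof (induction n)
  case (Suc n)
  have "Poly_Mapping.single v (Suc n) = Poly_Mapping.single v 1 + Poly_Mapping.single v n"
    by (simp flip: single_add)
  then show ?case
    using Suc by (simp add: mvar_def mult_single)
qed simp

lemma prod_single_one:
  "finite A \<Longrightarrow> (\<Prod>x\<in>A. Poly_Mapping.single (f x) 1) = Poly_Mapping.single (\<Sum>x\<in>A. f x) 1"
  by (induction A rule: finite_induct) (simp_all add: mult_single)

lemma monom_eval_mvar: "monom_eval mvar m = Poly_Mapping.single m 1"
  by (simp add: monom_eval_def mvar_power prod_single_one sum_single_lookup)

lemma meval_mconst_mvar [simp]: "meval mconst mvar P = P"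
  by (simp add: meval_def monom_eval_mvar mconst_def mult_single sum_single_lookup)

lemma meval_cong:
  assumes "\<And>v. v \<in> mvars P \<Longrightarrow> \<sigma> v = \<tau> v"
  shows "meval \<kappa> \<sigma> P = meval \<kappa> \<tau> P"
  unfolding meval_def monom_eval_def
  by (intro sum.cong refl arg_cong2[where f = times] prod.cong arg_cong2[where f = power] assms)
    (auto simp: mvars_def)

lemma mvars_zero [simp]: "mvars 0 = {}"
  by (simp add: mvars_def)

lemma mvars_one [simp]: "mvars 1 = {}"
  by (simp add: mvars_def)

lemma mvars_mvar [simp]: "mvars (mvar v) = {v}"
  by (simp add: mvars_def mvar_def)

lemma mvars_add: "mvars (P + Q) \<subseteq> mvars P \<union> mvars Q"
  using keys_add[of P Q] by (auto simp: mvars_def)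

lemma mvars_mult: "mvars (P * Q) \<subseteq> mvars P \<union> mvars Q"
proof
  fix v assume "v \<in> mvars (P * Q)"
  then obtain m where m: "m \<in> Poly_Mapping.keys (P * Q)" "v \<in> Poly_Mapping.keys m"
    by (auto simp: mvars_def)
  then obtain a b where "m = a + b" "a \<in> Poly_Mapping.keys P" "b \<in> Poly_Mapping.keys Q"
    using keys_mult by blast
  then show "v \<in> mvars P \<union> mvars Q"
    using m(2) keys_add[of a b] by (auto simp: mvars_def)
qed

lemma mvars_sum: "mvars (sum f A) \<subseteq> (\<Union>x\<in>A. mvars (f x))"
  by (induction A rule: infinite_finite_induct) (auto dest!: subsetD[OF mvars_add])

lemma mvars_prod: "mvars (prod f A) \<subseteq> (\<Union>x\<in>A. mvars (f x))"
  by (induction A rule: infinite_finite_induct) (auto dest!: subsetD[OF mvars_mult])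

lemma mvars_power: "mvars (P ^ n) \<subseteq> mvars P"
  by (induction n) (auto dest!: subsetD[OF mvars_mult])

lemma mvars_meval_subset:
  assumes "\<And>v. mvars (\<sigma> v) \<subseteq> V"
  shows "mvars (meval mconst \<sigma> P) \<subseteq> V"
proof -
  have "mvars (monom_eval \<sigma> m) \<subseteq> V" for m
    unfolding monom_eval_def using mvars_prod mvars_power assms by blast
  moreover have "mvars (mconst c) = {}" for c :: 'a
    by (simp add: mvars_def mconst_def)
  ultimately show ?thesis
    unfolding meval_def using mvars_sum mvars_mult by blast
qed

locale ideal =
  fixes J :: "'a::comm_ring_1 set"
  assumes zero_mem: "0 \<in> J"
    and add_mem: "x \<in> J \<Longrightarrow> y \<in> J \<Longrightarrow> x + y \<in> J"
    and mult_left_mem: "x \<in> J \<Longrightarrow> r * x \<in> J"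
begin

lemma cong_add: "a - b \<in> J \<Longrightarrow> c - d \<in> J \<Longrightarrow> (a + c) - (b + d) \<in> J"
  by (metis add_mem add_diff_add)

lemma cong_mult:
  assumes "a - b \<in> J" "c - d \<in> J"
  shows "a * c - b * d \<in> J"
proof -
  have "a * c - b * d = a * (c - d) + d * (a - b)"
    by (simp add: algebra_simps)
  then show ?thesis
    using assms by (simp add: add_mem mult_left_mem)
qed

lemma cong_sum: "(\<And>x. x \<in> A \<Longrightarrow> f x - g x \<in> J) \<Longrightarrow> sum f A - sum g A \<in> J"
  by (induction A rule: infinite_finite_induct) (simp_all add: zero_mem cong_add)

lemma cong_prod: "(\<And>x. x \<in> A \<Longrightarrow> f x - g x \<in> J) \<Longrightarrow> prod f A - prod g A \<in> J"
  by (induction A rule: infinite_finite_induct) (simp_all add: zero_mem cong_mult)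

lemma cong_power: "a - b \<in> J \<Longrightarrow> a ^ n - b ^ n \<in> J"
  by (induction n) (simp_all add: zero_mem cong_mult)

lemma meval_cong_mem:
  assumes "\<And>v. v \<in> mvars P \<Longrightarrow> \<sigma> v - \<tau> v \<in> J"
  shows "meval \<kappa> \<sigma> P - meval \<kappa> \<tau> P \<in> J"
  unfolding meval_def monom_eval_def
  by (intro cong_sum cong_mult cong_prod cong_power assms) (auto simp: zero_mem mvars_def)

end

definition ideal_gen :: "(nat \<Rightarrow> 'a::comm_ring_1) \<Rightarrow> nat \<Rightarrow> 'a set" where
  "ideal_gen f n = range (\<lambda>c. \<Sum>i<n. c i * f i)"

lemma ideal_ideal_gen: "ideal (ideal_gen f n)"
proof
  show "0 \<in> ideal_gen f n"
    unfolding ideal_gen_def by (auto intro!: range_eqI[of _ _ "\<lambda>_. 0"])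
next
  fix x y assume "x \<in> ideal_gen f n" "y \<in> ideal_gen f n"
  then obtain c d where "x = (\<Sum>i<n. c i * f i)" "y = (\<Sum>i<n. d i * f i)"
    unfolding ideal_gen_def by blast
  then have "x + y = (\<Sum>i<n. (c i + d i) * f i)"
    by (simp add: sum.distrib distrib_right)
  then show "x + y \<in> ideal_gen f n"
    unfolding ideal_gen_def by (rule range_eqI[where x = "\<lambda>i. c i + d i"])
next
  fix x r assume "x \<in> ideal_gen f n"
  then obtain c where "x = (\<Sum>i<n. c i * f i)"
    unfolding ideal_gen_def by blast
  then have "r * x = (\<Sum>i<n. (r * c i) * f i)"
    by (simp add: sum_distrib_left mult.assoc)
  then show "r * x \<in> ideal_gen f n"
    unfolding ideal_gen_def by (rule range_eqI[where x = "\<lambda>i. r * c i"])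
qed

lemma ideal_gen_generator:
  assumes "i < n"
  shows "f i \<in> ideal_gen f n"
proof -
  have "f i = (\<Sum>j<n. (if j = i then 1 else 0) * f j)"
    using assms by (simp add: if_distrib[of "\<lambda>x. x * _"] cong: if_cong)
  then show ?thesis
    unfolding ideal_gen_def by (rule range_eqI[where x = "\<lambda>j. if j = i then 1 else 0"])
qed

lemma comm_ring_hom_mconst_poly: "comm_ring_hom (\<lambda>c. [:mconst c:])"
  using comm_ring_hom_compose[OF comm_ring_hom_const_poly comm_ring_hom_mconst]
  by (simp add: comp_def)

lemma const_poly_eq_meval: "[:P:] = meval (\<lambda>c. [:mconst c:]) (\<lambda>v. [:mvar v:]) P"
  using comm_ring_hom.hom_meval[OF comm_ring_hom_const_poly, of mconst mvar P]
  by (simp add: comp_def)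

lemma comm_ring_hom_phi: "comm_ring_hom (phi p)"
  unfolding phi_def msubst_eq_meval
  by (rule comm_ring_hom.comm_ring_hom_meval[OF comm_ring_hom_mconst])

lemma phi_mvar [simp]: "phi p (mvar v) = phi_img p v"
  by (simp add: phi_def msubst_eq_meval comm_ring_hom.meval_mvar[OF comm_ring_hom_mconst])

lemma phi_fgen_root:
  assumes "i < p"
  shows "poly (map_poly (phi p) (fgen p i :: 'a::comm_ring_1 mpoly poly)) (- mvar 0) = 0"
proof -
  interpret phi: comm_ring_hom "phi p :: 'a mpoly \<Rightarrow> 'a mpoly"
    by (rule comm_ring_hom_phi)
  show ?thesis
  proof (cases "i = 0")
    case True
    have "phi_img p (2 * p) = (mvar p * mvar 0 :: 'a mpoly)"
      and "phi_img p p = (mvar p + mvar 0 :: 'a mpoly)"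
      using assms True by (auto simp: phi_img_def)
    then show ?thesis
      using True by (simp add: fgen_def map_poly_pCons algebra_simps)
  next
    case False
    have "phi_img p (p + i) = (mvar i * mvar 0 :: 'a mpoly)"
      and "phi_img p i = (mvar i :: 'a mpoly)"
      using assms False by (auto simp: phi_img_def)
    then show ?thesis
      using False by (simp add: fgen_def map_poly_pCons algebra_simps)
  qed
qed

lemma I_ideal_subset_ker_phi: "(I_ideal p :: 'a::comm_ring_1 mpoly set) \<subseteq> ker_phi p"
proof
  fix g :: "'a mpoly" assume "g \<in> I_ideal p"
  then obtain c where g: "g \<in> S_ring p" and gc: "[:g:] = (\<Sum>i<p. c i * fgen p i)"
    unfolding I_ideal_def by blast
  define E :: "'a mpoly poly \<Rightarrow> 'a mpoly"
    where "E q = poly (map_poly (phi p) q) (- mvar 0)" for q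
  interpret phi: comm_ring_hom "phi p :: 'a mpoly \<Rightarrow> 'a mpoly"
    by (rule comm_ring_hom_phi)
  interpret E: comm_ring_hom E
    using comm_ring_hom_compose[OF comm_ring_hom_poly_eval phi.comm_ring_hom_map_poly]
    by (simp add: E_def[abs_def] comp_def)
  have "phi p g = E [:g:]"
    by (simp add: E_def map_poly_pCons)
  also have "\<dots> = (\<Sum>i<p. E (c i) * E (fgen p i))"
    by (simp add: gc E.hom_sum E.hom_mult)
  also have "\<dots> = 0"
    by (simp add: E_def phi_fgen_root)
  finally show "g \<in> ker_phi p"
    using g by (simp add: ker_phi_def)
qed

definition reduce_img :: "nat \<Rightarrow> nat \<Rightarrow> 'a::comm_ring_1 mpoly poly" where
  "reduce_img p v =
    (if v = 2 * p then [:0, - mvar p, -1:] else if p < v then [:0, - mvar (v - p):] else [:mvar v:])"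

definition psi_img :: "nat \<Rightarrow> nat \<Rightarrow> 'a::comm_ring_1 mpoly poly" where
  "psi_img p v = (if v = 0 then [:0, -1:] else if v = p then [:mvar p, 1:] else [:mvar v:])"

lemma const_poly_cong_reduce:
  assumes "mvars g \<subseteq> {1..2 * p}"
  shows "[:g:] - meval (\<lambda>c. [:mconst c:]) (reduce_img p) g \<in> ideal_gen (fgen p) p"
proof -
  interpret J: ideal "ideal_gen (fgen p) p"
    by (rule ideal_ideal_gen)
  have var_mem: "[:mvar v:] - reduce_img p v \<in> ideal_gen (fgen p) p" if v: "v \<in> {1..2 * p}" for v
  proof -
    consider "v = 2 * p" | "p < v" "v < 2 * p" | "v \<le> p"
      using v by fastforce
    then show ?thesis
    proof cases
      case 1
      then have "[:mvar v:] - reduce_img p v = fgen p 0"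
        by (simp add: reduce_img_def fgen_def)
      moreover have "0 < p"
        using 1 v by simp
      ultimately show ?thesis
        by (metis ideal_gen_generator)
    next
      case 2
      then have "[:mvar v:] - reduce_img p v = fgen p (v - p)"
        by (simp add: reduce_img_def fgen_def)
      moreover have "v - p < p"
        using 2 by simp
      ultimately show ?thesis
        by (metis ideal_gen_generator)
    next
      case 3
      then show ?thesis
        using v by (simp add: reduce_img_def J.zero_mem)
    qed
  qed
  show ?thesis
    unfolding const_poly_eq_meval[of g] by (rule J.meval_cong_mem) (use assms var_mem in blast)
qed

lemma reduce_eq_psi_phi:
  assumes "mvars g \<subseteq> {1..2 * p}"
  shows "meval (\<lambda>c. [:mconst c:]) (reduce_img p) g =
    meval (\<lambda>c. [:mconst c:]) (psi_img p) (phi p g)"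
proof -
  interpret C: comm_ring_hom "\<lambda>c. [:mconst c:]"
    by (rule comm_ring_hom_mconst_poly)
  interpret psi: comm_ring_hom "meval (\<lambda>c. [:mconst c:]) (psi_img p)"
    by (rule C.comm_ring_hom_meval)
  have psi_phi: "meval (\<lambda>c. [:mconst c:]) (psi_img p) (phi_img p v) = reduce_img p v"
    if v: "v \<in> {1..2 * p}" for v
  proof -
    consider "v < p" | "v = p" | "p < v" "v < 2 * p" | "v = 2 * p"
      using v by fastforce
    then show ?thesis
      by cases (use v in \<open>auto simp: phi_img_def psi_img_def reduce_img_def psi.hom_add psi.hom_mult\<close>)
  qed
  have "meval (\<lambda>c. [:mconst c:]) (psi_img p) (phi p g) =
      meval (\<lambda>c. [:mconst c:]) (\<lambda>v. meval (\<lambda>c. [:mconst c:]) (psi_img p) (phi_img p v)) g"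
    by (simp add: phi_def msubst_eq_meval psi.hom_meval comp_def)
  also have "\<dots> = meval (\<lambda>c. [:mconst c:]) (reduce_img p) g"
    using assms by (intro meval_cong) (auto simp: psi_phi)
  finally show ?thesis ..
qed

lemma I_ideal_memI:
  assumes g: "g \<in> S_ring p" and gen: "[:g:] \<in> ideal_gen (fgen p) p"
  shows "g \<in> I_ideal p"
proof -
  obtain c where gc: "[:g:] = (\<Sum>i<p. c i * fgen p i)"
    using gen unfolding ideal_gen_def by blast
  define \<pi> :: "'a mpoly \<Rightarrow> 'a mpoly"
    where "\<pi> = meval mconst (\<lambda>v. if v \<in> {1..2 * p} then mvar v else 0)"
  interpret \<pi>: comm_ring_hom \<pi>
    unfolding \<pi>_def by (rule comm_ring_hom.comm_ring_hom_meval[OF comm_ring_hom_mconst])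
  interpret \<Pi>: comm_ring_hom "map_poly \<pi>"
    by (rule \<pi>.comm_ring_hom_map_poly)
  have \<pi>_S_ring: "\<pi> x \<in> S_ring p" for x
    unfolding \<pi>_def S_ring_def mem_Collect_eq by (rule mvars_meval_subset) simp
  have "\<pi> g = meval mconst mvar g"
    unfolding \<pi>_def using g by (intro meval_cong) (auto simp: S_ring_def)
  then have \<pi>_g: "\<pi> g = g"
    by simp
  have \<pi>_mvar: "\<pi> (mvar v) = mvar v" if "v \<in> {1..2 * p}" for v
    using that by (simp add: \<pi>_def comm_ring_hom.meval_mvar[OF comm_ring_hom_mconst])
  have \<pi>_fgen: "map_poly \<pi> (fgen p i) = fgen p i" if "i < p" for i
    using that by (simp add: fgen_def map_poly_pCons \<pi>_mvar)
  have "[:g:] = map_poly \<pi> [:g:]"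
    by (simp add: map_poly_pCons \<pi>_g)
  also have "\<dots> = (\<Sum>i<p. map_poly \<pi> (c i) * fgen p i)"
    by (simp add: gc \<Pi>.hom_sum \<Pi>.hom_mult \<pi>_fgen)
  finally show ?thesis
    using g \<pi>_S_ring unfolding I_ideal_def
    by (auto simp: coeff_map_poly intro!: exI[of _ "\<lambda>i. map_poly \<pi> (c i)"])
qed

lemma ker_phi_subset_I_ideal: "(ker_phi p :: 'a::comm_ring_1 mpoly set) \<subseteq> I_ideal p"
proof
  fix g :: "'a mpoly" assume "g \<in> ker_phi p"
  then have g: "g \<in> S_ring p" and "phi p g = 0"
    by (simp_all add: ker_phi_def)
  then have "meval (\<lambda>c. [:mconst c:]) (reduce_img p) g = 0"
    using reduce_eq_psi_phi[of g p] by (simp add: S_ring_def)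
  then have "[:g:] \<in> ideal_gen (fgen p) p"
    using const_poly_cong_reduce[of g p] g by (simp add: S_ring_def)
  then show "g \<in> I_ideal p"
    by (rule I_ideal_memI[OF g])
qed

theorem proposition6p2:
  fixes p :: nat
  assumes "p \<ge> 3"
  shows "(I_ideal p :: 'a::field mpoly set) = ker_phi p"
  by (intro equalityI I_ideal_subset_ker_phi ker_phi_subset_I_ideal)

end
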